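(* Let $n>p\ge 2$ and consider the linear model $\mathbf{y}=\mathbf{X}\boldsymbol{\beta}+\boldsymbol{\varepsilon}$, where $\mathbf{X}=[\mathbf{x}_1,\dots,\mathbf{x}_p]$ is a known $n\times p$ matrix with linearly independent columns, each column having mean $0$ and Euclidean length $1$, $\boldsymbol{\beta}=(\beta_1,\dots,\beta_p)^T$ is unknown, and $E(\boldsymbol{\varepsilon})=\mathbf{0}$, $\mathrm{var}(\boldsymbol{\varepsilon})=\mathbf{I}$. Suppose there is a constant $r>0$ with $\mathrm{corr}(\mathbf{x}_i,\mathbf{x}_j)=r$ for all $i\ne j$. Let $\hat{\boldsymbol{\beta}}=(\mathbf{X}^T\mathbf{X})^{-1}\mathbf{X}^T\mathbf{y}$, and for $\mathbf{w}$ in the simplex $W=\{\mathbf{w}\in\mathbb{R}^p: w_i\ge0,\ \sum_i w_i=1\}$ write $\mathrm{var}(\hat{\xi}(\mathbf{w}),r)$ for the variance of $\mathbf{w}^T\hat{\boldsymbol{\beta}}$ (which depends only on $p$, $r$ and $\mathbf{w}$). Let $\mathbf{w}_j\in W$ be the $j$-th standard basis vector, so that $\mathbf{w}_j^T\hat{\boldsymbol{\beta}}=\hat\beta_j$. Then for each fixed $r$, $$\mathrm{var}(\hat{\beta}_j,r)=\mathrm{var}(\hat{\xi}(\mathbf{w}_j),r)=\max_{\mathbf{w}\in W}\mathrm{var}(\hat{\xi}(\mathbf{w}),r).$$ Further, $\mathrm{var}(\hat{\beta}_j,r)$, viewed as a function of $r\in(0,1)$, is strictly monotone increasing and $\lim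_{r\to1}\mathrm{var}(\hat{\beta}_j,r)=+\infty$.
   Context: The variance of $\mathbf{w}^T\hat{\boldsymbol\beta}$ in this model equals $\mathbf{w}^T(\mathbf{X}^T\mathbf{X})^{-1}\mathbf{w}$, where $\mathbf{X}^T\mathbf{X}$ has $1$ on the diagonal and $r$ off the diagonal; hence it is a function of $p$, $r$ and $\mathbf{w}$ only. *)

theory Defs
  imports "HOL-Analysis.Analysis"
begin

definition vmean :: "real^'n \<Rightarrow> real" where
  "vmean x = (\<Sum>k\<in>UNIV. x $ k) / real CARD('n)"

definition corr :: "real^'n \<Rightarrow> real^'n \<Rightarrow> real" where
  "corr x y = (\<Sum>k\<in>UNIV. (x $ k - vmean x) * (y $ k - vmean y)) /
     sqrt ((\<Sum>k\<in>UNIV. (x $ k - vmean x)^2) * (\<Sum>k\<in>UNIV. (y $ k - vmean y)^2))"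

definition simplex_W :: "(real^'p) set" where
  "simplex_W = {w. (\<forall>i. w $ i \<ge> 0) \<and> (\<Sum>i\<in>UNIV. w $ i) = 1}"

text \<open>Variance of w^T betahat in the model y = X beta + eps, var(eps) = I:
  var(w^T (X^T X)^{-1} X^T y) = w^T (X^T X)^{-1} w.\<close>
definition var_xi_X :: "real^'p^'n \<Rightarrow> real^'p \<Rightarrow> real" where
  "var_xi_X X w = w \<bullet> (matrix_inv (transpose X ** X) *v w)"

definition equicorr :: "real \<Rightarrow> real^'p^'p" where
  "equicorr r = (\<chi> i j. if i = j then 1 else r)"

definition var_xi :: "real^'p \<Rightarrow> real \<Rightarrow> real" where
  "var_xi w r = w \<bullet> (matrix_inv (equicorr r :: real^'p^'p) *v w)"

end

theory Submission
  imports Defs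
begin

text \<open>
  Since the columns of X are centred unit vectors, their correlations are their inner products,
  so the Gram matrix X^T X is the equicorrelation matrix (1 - r) I + r J, with J the all-ones
  matrix. Matrices of the form a I + b J are closed under multiplication, which gives the
  explicit inverse (I - r / (1 + (p - 1) r) J) / (1 - r). Hence on the simplex
  var(w, r) = (|w|^2 - r / (1 + (p - 1) r)) / (1 - r), and |w|^2 <= 1 with equality at the
  vertices. At a vertex the variance is the rational function
  (1 + (p - 2) r) / ((1 - r) (1 + (p - 1) r)), increasing on (0, 1) with a pole at 1.
  Finally, r < 1 because two distinct unit vectors have inner product below 1.
\<close>

lemma matrix_inv_unique:
  fixes A :: "'a::semiring_1^'n^'m" and B :: "'a^'m^'n"
  assumes "A ** B = mat 1" "B ** A = mat 1"
  shows "matrix_inv A = B"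
proof -
  let ?C = "matrix_inv A"
  have C: "A ** ?C = mat 1 \<and> ?C ** A = mat 1"
    unfolding matrix_inv_def by (rule someI[of _ B]) (use assms in auto)
  have "?C = ?C ** (A ** B)" using assms by simp
  also have "\<dots> = (?C ** A) ** B" by (simp add: matrix_mul_assoc)
  also have "\<dots> = B" using C by simp
  finally show ?thesis .
qed

definition compound_symmetric :: "real \<Rightarrow> real \<Rightarrow> real^'p^'p" where
  "compound_symmetric a b = (\<chi> i k. (if i = k then a else 0) + b)"

lemma equicorr_eq_compound_symmetric: "equicorr r = compound_symmetric (1 - r) r"
  by (simp add: equicorr_def compound_symmetric_def vec_eq_iff)

lemma compound_symmetric_mult_vec:
  "(compound_symmetric a b :: real^'p^'p) *v w = a *\<^sub>R w + (b * (\<Sum>k\<in>UNIV. w $ k)) *\<^sub>R 1"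
proof -
  have "(\<Sum>k\<in>UNIV. ((if i = k then a else 0) + b) * w $ k)
      = (\<Sum>k\<in>UNIV. (if i = k then a * w $ k else 0) + b * w $ k)" for i :: 'p
    by (rule sum.cong) (auto simp: distrib_right)
  then show ?thesis
    by (simp add: compound_symmetric_def matrix_vector_mult_def vec_eq_iff sum.distrib
        sum_distrib_left)
qed

lemma compound_symmetric_mult:
  "(compound_symmetric a b :: real^'p^'p) ** compound_symmetric c d
     = compound_symmetric (a * c) (a * d + b * c + real CARD('p) * b * d)"
proof -
  have "(\<Sum>l\<in>UNIV. ((if i = l then a else 0) + b) * ((if l = k then c else 0) + d))
      = (if i = k then a * c else 0) + (a * d + b * c + real CARD('p) * b * d)" for i k :: 'p
  proof -
    have "(\<Sum>l\<in>UNIV. ((if i = l then a else 0) + b) * ((if l = k then c else 0) + d))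
        = (\<Sum>l\<in>UNIV. (if i = l then a * ((if l = k then c else 0) + d) else 0)
            + b * ((if l = k then c else 0) + d))"
      by (rule sum.cong) (auto simp: distrib_right)
    also have "\<dots> = a * ((if i = k then c else 0) + d) + b * (c + real CARD('p) * d)"
      by (simp add: sum.distrib flip: sum_distrib_left)
    also have "\<dots> = (if i = k then a * c else 0) + (a * d + b * c + real CARD('p) * b * d)"
      by (simp add: algebra_simps)
    finally show ?thesis .
  qed
  then show ?thesis
    by (simp add: compound_symmetric_def matrix_matrix_mult_def vec_eq_iff)
qed

lemma inner_compound_symmetric:
  "w \<bullet> ((compound_symmetric a b :: real^'p^'p) *v w) = a * (w \<bullet> w) + b * (\<Sum>i\<in>UNIV. w $ i)\<^sup>2"
proof -
  have "w \<bullet> (1 :: real^'p) = (\<Sum>i\<in>UNIV. w $ i)"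
    by (simp add: inner_vec_def)
  then show ?thesis
    by (simp add: compound_symmetric_mult_vec inner_add_right power2_eq_square)
qed

lemma matrix_inv_equicorr:
  assumes "r \<noteq> 1" "1 + (real CARD('p) - 1) * r \<noteq> 0"
  shows "matrix_inv (equicorr r :: real^'p^'p)
    = compound_symmetric (1 / (1 - r)) (- r / ((1 - r) * (1 + (real CARD('p) - 1) * r)))"
proof -
  define c where "c = 1 + (real CARD('p) - 1) * r"
  define b where "b = - r / ((1 - r) * c)"
  have "1 - r \<noteq> 0" "c \<noteq> 0" using assms by (simp_all add: c_def)
  have "(1 - r) * b + real CARD('p) * r * b = b * c"
    by (simp add: c_def algebra_simps)
  also have "\<dots> = - r / (1 - r)"
    using \<open>c \<noteq> 0\<close> by (simp add: b_def)
  finally have "(1 - r) * b + r * (1 / (1 - r)) + real CARD('p) * r * b = 0"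
    by simp
  moreover have "mat 1 = (compound_symmetric 1 0 :: real^'p^'p)"
    by (simp add: mat_def compound_symmetric_def vec_eq_iff)
  ultimately have "matrix_inv (equicorr r :: real^'p^'p) = compound_symmetric (1 / (1 - r)) b"
    using \<open>1 - r \<noteq> 0\<close>
    by (intro matrix_inv_unique)
      (simp_all add: equicorr_eq_compound_symmetric compound_symmetric_mult algebra_simps)
  then show ?thesis by (simp add: b_def c_def)
qed

lemma var_xi_eq:
  fixes w :: "real^'p"
  assumes "r \<noteq> 1" "1 + (real CARD('p) - 1) * r \<noteq> 0"
  shows "var_xi w r
    = (w \<bullet> w - r * (\<Sum>i\<in>UNIV. w $ i)\<^sup>2 / (1 + (real CARD('p) - 1) * r)) / (1 - r)"
proof -
  obtain c where c: "c = 1 + (real CARD('p) - 1) * r" by simp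
  with assms have "var_xi w r = (w \<bullet> w - r * (\<Sum>i\<in>UNIV. w $ i)\<^sup>2 / c) / (1 - r)"
    by (simp add: var_xi_def matrix_inv_equicorr inner_compound_symmetric diff_divide_distrib)
  with c show ?thesis by simp
qed

lemma one_plus_card_pred_mult_pos:
  assumes "0 \<le> r"
  shows "0 < 1 + (real CARD('p::finite) - 1) * r"
proof -
  have "1 \<le> real CARD('p)" by (simp add: Suc_le_eq)
  with assms show ?thesis by (simp add: add_pos_nonneg)
qed

lemma var_xi_axis:
  assumes "0 \<le> r" "r < 1"
  shows "var_xi (axis j 1 :: real^'p) r
    = (1 + (real CARD('p) - 2) * r) / ((1 - r) * (1 + (real CARD('p) - 1) * r))"
proof -
  obtain c where c: "c = 1 + (real CARD('p) - 1) * r" by simp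
  have "r \<noteq> 1" "c \<noteq> 0"
    using assms one_plus_card_pred_mult_pos[of r, where 'p='p] by (simp_all add: c)
  moreover have "axis j 1 \<bullet> (axis j 1 :: real^'p) = 1"
    by (simp add: inner_axis_axis)
  moreover have "(\<Sum>i\<in>UNIV. (axis j 1 :: real^'p) $ i) = 1"
    by (simp add: axis_def)
  moreover have "c - r = 1 + (real CARD('p) - 2) * r"
    by (simp add: c algebra_simps)
  moreover have "(1 - r / c) / (1 - r) = (c - r) / ((1 - r) * c)"
    using \<open>r \<noteq> 1\<close> \<open>c \<noteq> 0\<close> by (simp add: field_simps)
  ultimately show ?thesis
    using c by (simp add: var_xi_eq)
qed

lemma inner_self_le_1_if_simplex_W:
  assumes "w \<in> simplex_W"
  shows "w \<bullet> w \<le> 1"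
proof -
  have w0: "\<And>i. w $ i \<ge> 0" and ws: "(\<Sum>i\<in>UNIV. w $ i) = 1"
    using assms unfolding simplex_W_def by auto
  have "w $ i \<le> 1" for i
    using member_le_sum[of i UNIV "\<lambda>i. w $ i"] w0 ws by simp
  then have "w \<bullet> w \<le> (\<Sum>i\<in>UNIV. w $ i)"
    unfolding inner_vec_def by (intro sum_mono) (simp add: w0 mult_left_le)
  with ws show ?thesis by simp
qed

lemma var_xi_le_var_xi_axis:
  fixes w :: "real^'p"
  assumes "w \<in> simplex_W" "r < 1" "1 + (real CARD('p) - 1) * r \<noteq> 0"
  shows "var_xi w r \<le> var_xi (axis j 1 :: real^'p) r"
proof -
  have "(\<Sum>i\<in>UNIV. w $ i) = 1"
    using assms(1) by (simp add: simplex_W_def)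
  moreover have "(\<Sum>i\<in>UNIV. (axis j 1 :: real^'p) $ i) = 1"
    by (simp add: axis_def)
  moreover have "axis j 1 \<bullet> (axis j 1 :: real^'p) = 1"
    by (simp add: inner_axis_axis)
  moreover have "r \<noteq> 1" using assms(2) by simp
  ultimately show ?thesis
    using assms(2,3) inner_self_le_1_if_simplex_W[OF assms(1)]
    by (simp add: var_xi_eq divide_right_mono)
qed

lemma equicorr_vertex_variance_strict_mono:
  fixes p :: real
  assumes "p > 1"
  shows "strict_mono_on {0<..<1} (\<lambda>s. (1 + (p - 2) * s) / ((1 - s) * (1 + (p - 1) * s)))"
proof (rule strict_mono_onI)
  fix x y :: real
  assume x: "x \<in> {0<..<1}" and y: "y \<in> {0<..<1}" and "x < y"
  define N where "N s = 1 + (p - 2) * s" for s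
  define D where "D s = (1 - s) * (1 + (p - 1) * s)" for s
  have D: "D x > 0" "D y > 0"
    using x y assms unfolding D_def by (auto intro!: mult_pos_pos add_pos_nonneg)
  have "x * y < x" "x * y < y" "0 < p * (x * y)"
    using x y assms by simp_all
  moreover have "y + x + (p - 2) * x * y = (x - x * y) + (y - x * y) + p * (x * y)"
    by (simp add: algebra_simps)
  ultimately have "y + x + (p - 2) * x * y > 0"
    by linarith
  then have "(p - 1) * (y - x) * (y + x + (p - 2) * x * y) > 0"
    using assms \<open>x < y\<close> by simp
  moreover have "N y * D x - N x * D y = (p - 1) * (y - x) * (y + x + (p - 2) * x * y)"
    unfolding N_def D_def by algebra
  ultimately have "N x / D x < N y / D y"
    using D by (simp add: field_simps)
  then show "(1 + (p - 2) * x) / ((1 - x) * (1 + (p - 1) * x))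
    < (1 + (p - 2) * y) / ((1 - y) * (1 + (p - 1) * y))"
    by (simp add: N_def D_def)
qed

lemma equicorr_vertex_variance_tendsto_at_top:
  fixes p :: real
  assumes "p > 1"
  shows "filterlim (\<lambda>s. (1 + (p - 2) * s) / ((1 - s) * (1 + (p - 1) * s))) at_top (at_left 1)"
proof -
  have "filterlim (\<lambda>s. (1 + (p - 2) * s) * inverse ((1 - s) * (1 + (p - 1) * s)))
    at_top (at_left 1)"
  proof (rule filterlim_tendsto_pos_mult_at_top)
    have "((\<lambda>s. 1 + (p - 2) * s) \<longlongrightarrow> 1 + (p - 2) * 1) (at_left 1)"
      by (intro tendsto_intros)
    then show "((\<lambda>s. 1 + (p - 2) * s) \<longlongrightarrow> p - 1) (at_left 1)"
      by simp
    show "0 < p - 1" using assms by simp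
    show "filterlim (\<lambda>s. inverse ((1 - s) * (1 + (p - 1) * s))) at_top (at_left 1)"
    proof (rule filterlim_inverse_at_top)
      have "((\<lambda>s. (1 - s) * (1 + (p - 1) * s)) \<longlongrightarrow> (1 - 1) * (1 + (p - 1) * 1)) (at_left 1)"
        by (intro tendsto_intros)
      then show "((\<lambda>s. (1 - s) * (1 + (p - 1) * s)) \<longlongrightarrow> 0) (at_left 1)"
        by simp
      have "eventually (\<lambda>s. s \<in> {0<..<1}) (at_left (1::real))"
        by (rule eventually_at_left_real) simp
      then show "eventually (\<lambda>s. 0 < (1 - s) * (1 + (p - 1) * s)) (at_left 1)"
        by (rule eventually_mono) (use assms in \<open>auto intro!: mult_pos_pos add_pos_nonneg\<close>)
    qed
  qed
  then show ?thesis
    by (simp add: divide_inverse)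
qed

lemma strict_mono_on_var_xi_axis:
  assumes "CARD('p) \<ge> 2"
  shows "strict_mono_on {0<..<1} (\<lambda>s. var_xi (axis j 1 :: real^'p) s)"
  using equicorr_vertex_variance_strict_mono[of "real CARD('p)"] assms
  by (simp add: strict_mono_on_def var_xi_axis)

lemma var_xi_axis_tendsto_at_top:
  assumes "CARD('p) \<ge> 2"
  shows "filterlim (\<lambda>s. var_xi (axis j 1 :: real^'p) s) at_top (at_left 1)"
proof -
  have "eventually (\<lambda>s. var_xi (axis j 1 :: real^'p) s
      = (1 + (real CARD('p) - 2) * s) / ((1 - s) * (1 + (real CARD('p) - 1) * s))) (at_left 1)"
    by (rule eventually_mono[OF eventually_at_left_real[of 0]])
      (simp_all add: var_xi_axis)
  with equicorr_vertex_variance_tendsto_at_top[of "real CARD('p)"] assms show ?thesis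
    by (simp add: filterlim_cong[OF refl refl])
qed

lemma corr_centered:
  fixes x y :: "real^'n"
  assumes "vmean x = 0" "vmean y = 0"
  shows "corr x y = (x \<bullet> y) / (norm x * norm y)"
proof -
  have sum_sq: "(\<Sum>k\<in>UNIV. (z $ k)\<^sup>2) = (norm z)\<^sup>2" for z :: "real^'n"
    by (simp only: power2_norm_eq_inner) (simp add: inner_vec_def power2_eq_square)
  from assms show ?thesis
    by (simp add: corr_def inner_vec_def sum_sq real_sqrt_mult)
qed

lemma transpose_mult_self_eq_equicorr:
  fixes X :: "real^'p^'n"
  assumes "\<forall>i. vmean (column i X) = 0" "\<forall>i. norm (column i X) = 1"
    and "\<forall>i k. i \<noteq> k \<longrightarrow> corr (column i X) (column k X) = r"
  shows "transpose X ** X = equicorr r"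
proof -
  have "column i X \<bullet> column k X = (if i = k then 1 else r)" for i k
  proof (cases "i = k")
    case True
    then show ?thesis
      using assms(2) power2_norm_eq_inner[of "column i X"] by simp
  next
    case False
    then show ?thesis
      using assms corr_centered[of "column i X" "column k X"] by simp
  qed
  then show ?thesis
    by (simp add: matrix_mult_transpose_dot_column equicorr_def)
qed

lemma inner_lt_1_if_norm_eq_1:
  fixes u v :: "'a::real_inner"
  assumes "norm u = 1" "norm v = 1" "u \<noteq> v"
  shows "u \<bullet> v < 1"
proof -
  have "0 < (norm (u - v))\<^sup>2" using assms by simp
  also have "\<dots> = u \<bullet> u + v \<bullet> v - 2 * (u \<bullet> v)"
    by (simp add: power2_norm_eq_inner inner_diff inner_commute)
  also have "\<dots> = 2 - 2 * (u \<bullet> v)"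
    using assms by (simp add: power2_norm_eq_inner[symmetric])
  finally show ?thesis by simp
qed

lemma column_neq_if_independent:
  fixes X :: "real^'p^'n"
  assumes "\<forall>b. X *v b = 0 \<longrightarrow> b = 0" "i \<noteq> k"
  shows "column i X \<noteq> column k X"
proof -
  have "(axis i 1 - axis k 1 :: real^'p) $ i = 1" using assms(2) by (simp add: axis_def)
  then have "axis i 1 - axis k 1 \<noteq> (0 :: real^'p)"
    by (auto simp del: vector_minus_component)
  then have "X *v (axis i 1 - axis k 1) \<noteq> 0"
    using assms(1) by blast
  then show ?thesis
    by (simp add: matrix_vector_mult_diff_distrib matrix_vector_mult_basis)
qed

lemma common_correlation_lt_1:
  fixes X :: "real^'p^'n"
  assumes "CARD('p) \<ge> 2" "\<forall>b. X *v b = 0 \<longrightarrow> b = 0"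
    and "\<forall>i. vmean (column i X) = 0" "\<forall>i. norm (column i X) = 1"
    and "\<forall>i k. i \<noteq> k \<longrightarrow> corr (column i X) (column k X) = r"
  shows "r < 1"
proof -
  obtain i k :: 'p where "i \<noteq> k"
    using assms(1) card_le_Suc0_iff_eq[of "UNIV :: 'p set"] by fastforce
  then have "r = column i X \<bullet> column k X"
    using assms(3-5) corr_centered[of "column i X" "column k X"] by simp
  also have "\<dots> < 1"
    using assms(4) column_neq_if_independent[OF assms(2) \<open>i \<noteq> k\<close>]
    by (intro inner_lt_1_if_norm_eq_1) auto
  finally show ?thesis .
qed

theorem corollary1:
  fixes X :: "real^'p^'n" and r :: real and j :: 'p
  assumes "CARD('n) > CARD('p)" and "CARD('p) \<ge> 2"
    and indep: "\<forall>b. X *v b = 0 \<longrightarrow> b = 0"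
    and mean0: "\<forall>i. vmean (column i X) = 0"
    and len1: "\<forall>i. norm (column i X) = 1"
    and rpos: "r > 0"
    and corr_r: "\<forall>i k. i \<noteq> k \<longrightarrow> corr (column i X) (column k X) = r"
  shows "(\<forall>w. var_xi_X X w = var_xi w r)
    \<and> axis j 1 \<in> simplex_W
    \<and> (\<forall>w::real^'p \<in> simplex_W. var_xi w r \<le> var_xi (axis j (1::real)) r)
    \<and> strict_mono_on {0<..<1} (\<lambda>s. var_xi (axis j (1::real)) s)
    \<and> filterlim (\<lambda>s. var_xi (axis j (1::real)) s) at_top (at_left 1)"
proof -
  have "r < 1"
    using assms(2) indep mean0 len1 corr_r by (rule common_correlation_lt_1)
  then have "var_xi w r \<le> var_xi (axis j 1) r" if "w \<in> simplex_W" for w :: "real^'p"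
    using that rpos one_plus_card_pred_mult_pos[of r, where 'p='p]
    by (intro var_xi_le_var_xi_axis) auto
  moreover have "transpose X ** X = equicorr r"
    using mean0 len1 corr_r by (rule transpose_mult_self_eq_equicorr)
  ultimately show ?thesis
    using strict_mono_on_var_xi_axis[OF assms(2)] var_xi_axis_tendsto_at_top[OF assms(2)]
    by (simp add: var_xi_X_def var_xi_def simplex_W_def axis_def)
qed

end
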